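(* With notation as in the context: (a) If $v,w\in\mathscr{O}_3$ are $J$ cosets, then $dd(v,w)$ equals the number of positions (out of six) at which the strings $\gamma_1(v)$ and $\gamma_1(w)$ disagree. (b) If $v,w$ are $L$ cosets of different colors but with the same label, then $dd(v,w)=2$. (c) If $v,w$ are distinct $L$ cosets of the same color, then $dd(v,w)=2$, unless $\{\gamma_1(v),\gamma_1(w)\}=\{i,\overline i\}$ for some $1\le i\le 6$, in which case $dd(v,w)=4$. (d) If $v,w$ are $L$ cosets of different colors and different labels, then $dd(v,w)=4$, unless $v=-w$, in which case $dd(v,w)=6$. (e) Let $v=v(i,j)$ with $i\in\{0,1\}$ and $2\le j\le 7$ (an unbarred $L$ coset of either color, with label $j-1$), and let $w$ be a $J$ coset. Then $dd(v,w)=2$ if $\gamma_1(w)$ has a plus sign in position $j-1$, and $dd(v,w)=4$ otherwise. (f) Let $v=-v(i,j)$ with $i\in\{0,1\}$ and $2\le j\le7$ (a barred $L$ coset of either color, with label $\overline{j-1}$), and let $w$ be a $J$ coset. Then $dd(v,w)=2$ if $\gamma_1(w)$ has a minus sign in position $j-1$, and $dd(v,w)=4$ otherwise.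
   Context: There are 56 symbols $\pm v(i,j)$, $0\le i<j\le 7$ (they index the right cosets of a subgroup $G\cong W(E_6)$ in a group $H\cong W(E_7)$; only the symbols are needed here). To each associate the integer vector $\pm v(i,j)=\pm\big(4(\vec e_{i+1}+\vec e_{j+1})-\sum_{k=1}^8\vec e_k\big)\in\mathbb{Z}^8$, and define the discrete distance $dd(v,w)=\frac1{16}\sum_{k=1}^8(v_k-w_k)^2$. Blue $L$ cosets: $\mathscr{O}_1=\{v(0,j),-v(1,j):2\le j\le7\}$; red $L$ cosets: $\mathscr{O}_2=\{v(1,j),-v(0,j):2\le j\le7\}$; $J$ cosets: $\mathscr{O}_3=\{\pm v(0,1)\}\cup\{\pm v(i,j):2\le i<j\le7\}$. Labels: $\gamma_1(v(0,j))=\gamma_1(v(1,j))=j-1$ and $\gamma_1(-v(1,j))=\gamma_1(-v(0,j))=\overline{j-1}$ for $2\le j\le7$; $\gamma_1(v(0,1))={+}{+}{+}{+}{+}{+}$, $\gamma_1(-v(0,1))={-}{-}{-}{-}{-}{-}$; for $2\le i<j\le7$, $\gamma_1(v(i,j))$ is the length-6 sign string with plus signs in positions $i-1$ and $j-1$ and minus signs elsewhere, and $\gamma_1(-v(i,j))$ is its negation (all signs reversed). *)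

theory Defs
  imports Complex_Main
begin

text \<open>A symbol Sym s i j stands for +v(i,j) if s = True and for -v(i,j) if s = False,
  with 0 <= i < j <= 7.\<close>
datatype sym = Sym bool nat nat

text \<open>Integer vector in Z^8; coordinate k (0 <= k < 8) is the coefficient of e_(k+1).\<close>
definition vec :: "sym \<Rightarrow> nat \<Rightarrow> int" where
  "vec v k = (case v of Sym s i j \<Rightarrow>
      (if s then 1 else -1) * (4 * (of_bool (k = i) + of_bool (k = j)) - 1))"

definition dd :: "sym \<Rightarrow> sym \<Rightarrow> real" where
  "dd v w = real_of_int (\<Sum>k<8. (vec v k - vec w k)^2) / 16"

fun neg :: "sym \<Rightarrow> sym" where
  "neg (Sym s i j) = Sym (\<not> s) i j"

definition O1 :: "sym set" where
  "O1 = {Sym True 0 j | j. 2 \<le> j \<and> j \<le> 7} \<union> {Sym False 1 j | j. 2 \<le> j \<and> j \<le> 7}"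

definition O2 :: "sym set" where
  "O2 = {Sym True 1 j | j. 2 \<le> j \<and> j \<le> 7} \<union> {Sym False 0 j | j. 2 \<le> j \<and> j \<le> 7}"

definition O3 :: "sym set" where
  "O3 = {Sym s 0 1 | s. True} \<union> {Sym s i j | s i j. 2 \<le> i \<and> i < j \<and> j \<le> 7}"

text \<open>Labels: Lab i is i, BarLab i is i-bar, Str a is a length-6 sign string
  (True = plus), position p (1-based) being a ! (p - 1).\<close>
datatype label = Lab nat | BarLab nat | Str "bool list"

fun gamma1 :: "sym \<Rightarrow> label" where
  "gamma1 (Sym s i j) =
     (if i \<le> 1 \<and> 2 \<le> j then (if s then Lab (j - 1) else BarLab (j - 1))
      else if i = 0 \<and> j = 1 then Str (replicate 6 s)
      else Str (map (\<lambda>k. (k + 1 = i - 1 \<or> k + 1 = j - 1) = s) [0..<6]))"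

definition plus_at :: "label \<Rightarrow> nat \<Rightarrow> bool" where
  "plus_at l p = (case l of Str a \<Rightarrow> a ! (p - 1) | _ \<Rightarrow> False)"

definition minus_at :: "label \<Rightarrow> nat \<Rightarrow> bool" where
  "minus_at l p = (case l of Str a \<Rightarrow> \<not> a ! (p - 1) | _ \<Rightarrow> False)"

definition Lcos :: "sym set" where "Lcos = O1 \<union> O2"

definition diff_color :: "sym \<Rightarrow> sym \<Rightarrow> bool" where
  "diff_color v w = ((v \<in> O1 \<and> w \<in> O2) \<or> (v \<in> O2 \<and> w \<in> O1))"

definition same_color :: "sym \<Rightarrow> sym \<Rightarrow> bool" where
  "same_color v w = ((v \<in> O1 \<and> w \<in> O1) \<or> (v \<in> O2 \<and> w \<in> O2))"

end

theory Submission
  imports Defs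
begin

(* Every symbol is a signed vector +-(4(e_i + e_j) - 1) of squared length 24, and the inner
   product of 4(e_i + e_j) - 1 with 4(e_k + e_l) - 1 is 16 m - 8, where m = |{i, j} \<inter> {k, l}|.
   Hence dd = 4 - 2 m for equal signs and dd = 2 + 2 m for opposite signs, and every part
   reduces to computing m.  For J cosets the label of +-v(i, j), i >= 2, is the sign pattern of
   the support {i, j} on the coordinates 2..7, so the number of disagreeing positions is the
   size 4 - 2 m of the symmetric difference of the supports, or 6 - (4 - 2 m) when the signs
   differ. *)

definition pair_vector :: "nat \<Rightarrow> nat \<Rightarrow> nat \<Rightarrow> int" where
  "pair_vector i j x = 4 * (of_bool (x = i) + of_bool (x = j)) - 1"

lemma vec_Sym: "vec (Sym s i j) x = (if s then 1 else -1) * pair_vector i j x"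
  by (simp add: vec_def pair_vector_def)

lemma sum_pair_vector_mult:
  assumes "i \<noteq> j" "k \<noteq> l" "i < n" "j < n" "k < n" "l < n"
  shows "(\<Sum>x<n. pair_vector i j x * pair_vector k l x) =
    16 * int (card ({i, j} \<inter> {k, l})) - 16 + int n"
proof -
  have delta: "(\<Sum>x<n. of_bool (x = a) * of_bool (x = b) :: int) = of_bool (a = b)"
    if "a < n" for a b :: nat
    using that by (cases "a = b") (auto simp: of_bool_conj[symmetric])
  have single: "(\<Sum>x<n. of_bool (x = a) :: int) = 1" if "a < n" for a :: nat
    using that by simp
  have card: "int (card ({i, j} \<inter> {k, l})) =
      of_bool (i = k) + of_bool (i = l) + of_bool (j = k) + of_bool (j = l)"
    using assms(1,2) by (auto simp: card_insert_if insert_Diff_if)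
  show ?thesis
    using assms
    by (simp add: pair_vector_def algebra_simps sum.distrib sum_subtractf
        sum_distrib_left[symmetric] delta single card)
qed

lemma dd_Sym:
  assumes "i \<noteq> j" "k \<noteq> l" "i < 8" "j < 8" "k < 8" "l < 8"
  shows "dd (Sym s i j) (Sym t k l) =
    (if s = t then 4 - 2 * real (card ({i, j} \<inter> {k, l}))
     else 2 + 2 * real (card ({i, j} \<inter> {k, l})))"
proof -
  define \<sigma> \<tau> :: int where "\<sigma> = (if s then 1 else -1)" and "\<tau> = (if t then 1 else -1)"
  let ?a = "pair_vector i j" and ?b = "pair_vector k l"
  have "(vec (Sym s i j) x - vec (Sym t k l) x)^2 =
      ?a x * ?a x + ?b x * ?b x - 2 * (\<sigma> * \<tau>) * (?a x * ?b x)" for x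
    by (simp add: vec_Sym \<sigma>_def \<tau>_def power2_eq_square algebra_simps)
  then have "(\<Sum>x<8. (vec (Sym s i j) x - vec (Sym t k l) x)^2) =
      (\<Sum>x<8. ?a x * ?a x) + (\<Sum>x<8. ?b x * ?b x) - 2 * (\<sigma> * \<tau>) * (\<Sum>x<8. ?a x * ?b x)"
    by (simp add: sum.distrib sum_subtractf sum_distrib_left)
  also have "\<dots> = 48 - 2 * (\<sigma> * \<tau>) * (16 * int (card ({i, j} \<inter> {k, l})) - 8)"
    using sum_pair_vector_mult[of i j i j 8] sum_pair_vector_mult[of k l k l 8]
      sum_pair_vector_mult[of i j k l 8] assms
    by simp
  finally show ?thesis
    by (simp add: dd_def \<sigma>_def \<tau>_def)
qed

lemma card_sym_diff:
  assumes "finite A" "finite B"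
  shows "int (card (sym_diff A B)) = int (card A) + int (card B) - 2 * int (card (A \<inter> B))"
proof -
  have "card (sym_diff A B) = card (A - B) + card (B - A)"
    using assms by (intro card_Un_disjoint) auto
  moreover have "card A = card (A \<inter> B) + card (A - B)" "card B = card (A \<inter> B) + card (B - A)"
    using card_Int_Diff[OF assms(1), of B] card_Int_Diff[OF assms(2), of A]
    by (simp_all add: Int_commute)
  ultimately show ?thesis
    by linarith
qed

lemma card_Suc_shift:
  "card {p. a \<le> p \<and> p \<le> b \<and> R (Suc p)} = card {c. Suc a \<le> c \<and> c \<le> Suc b \<and> R c}"
proof -
  have "{c. Suc a \<le> c \<and> c \<le> Suc b \<and> R c} = Suc ` {p. a \<le> p \<and> p \<le> b \<and> R (Suc p)}"
  proof (intro set_eqI iffI)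
    fix c
    assume "c \<in> {c. Suc a \<le> c \<and> c \<le> Suc b \<and> R c}"
    then show "c \<in> Suc ` {p. a \<le> p \<and> p \<le> b \<and> R (Suc p)}"
      by (intro image_eqI[where x = "c - 1"]) auto
  qed auto
  then show ?thesis
    by (simp add: card_image)
qed

definition sign_string :: "nat set \<Rightarrow> bool \<Rightarrow> bool list" where
  "sign_string P s = map (\<lambda>q. (q + 2 \<in> P) = s) [0..<6]"

lemma nth_sign_string: "q < 6 \<Longrightarrow> sign_string P s ! q = ((q + 2 \<in> P) = s)"
  by (simp add: sign_string_def)

definition sign_mismatches :: "bool list \<Rightarrow> bool list \<Rightarrow> nat" where
  "sign_mismatches a b = card {p. 1 \<le> p \<and> p \<le> 6 \<and> a ! (p - 1) \<noteq> b ! (p - 1)}"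

lemma sign_mismatches_sign_string:
  assumes "P \<subseteq> {2..7}" "Q \<subseteq> {2..7}"
  shows "sign_mismatches (sign_string P s) (sign_string Q t) =
    (if s = t then card (sym_diff P Q) else 6 - card (sym_diff P Q))"
proof -
  have "sign_mismatches (sign_string P s) (sign_string Q t) =
      card {c. 2 \<le> c \<and> c \<le> 7 \<and> ((c \<in> P) = s) \<noteq> ((c \<in> Q) = t)}"
    using card_Suc_shift[of 1 6 "\<lambda>c. ((c \<in> P) = s) \<noteq> ((c \<in> Q) = t)"]
    by (simp add: sign_mismatches_def nth_sign_string numeral_2_eq_2 cong: conj_cong)
  also have "{c. 2 \<le> c \<and> c \<le> 7 \<and> ((c \<in> P) = s) \<noteq> ((c \<in> Q) = t)} =
      (if s = t then sym_diff P Q else {2..7} - sym_diff P Q)"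
    using assms by auto
  moreover have "card ({2..7} - sym_diff P Q) = 6 - card (sym_diff P Q)"
    using assms by (subst card_Diff_subset) (auto intro: finite_subset)
  ultimately show ?thesis
    by simp
qed

lemma Sym_in_O1_iff: "Sym s i j \<in> O1 \<longleftrightarrow> i \<le> 1 \<and> 2 \<le> j \<and> j \<le> 7 \<and> s = (i = 0)"
  by (auto simp: O1_def)

lemma Sym_in_O2_iff: "Sym s i j \<in> O2 \<longleftrightarrow> i \<le> 1 \<and> 2 \<le> j \<and> j \<le> 7 \<and> s = (i = 1)"
  by (auto simp: O2_def)

lemma Sym_in_O3_iff: "Sym s i j \<in> O3 \<longleftrightarrow> (i = 0 \<and> j = 1) \<or> (2 \<le> i \<and> i < j \<and> j \<le> 7)"
  by (auto simp: O3_def)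

(* The constant label of +-v(0,1) is read as the empty support carrying the opposite sign. *)
lemma gamma1_J_coset:
  assumes "Sym s i j \<in> O3"
  shows "gamma1 (Sym s i j) = Str (sign_string ({i, j} - {0, 1}) (s \<noteq> (i = 0)))"
  using assms by (auto simp: Sym_in_O3_iff sign_string_def map_replicate_const)

lemma dd_J_cosets:
  assumes "v \<in> O3" "w \<in> O3"
  shows "\<exists>a b. gamma1 v = Str a \<and> gamma1 w = Str b \<and> dd v w = sign_mismatches a b"
proof -
  obtain s i j t k l where v: "v = Sym s i j" and w: "w = Sym t k l"
    by (metis sym.exhaust)
  let ?P = "{i, j} - {0, 1}" and ?Q = "{k, l} - {0, 1}"
  have "(i = 0 \<and> j = 1) \<or> (2 \<le> i \<and> i < j \<and> j \<le> 7)"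
    "(k = 0 \<and> l = 1) \<or> (2 \<le> k \<and> k < l \<and> l \<le> 7)"
    using assms by (simp_all add: v w Sym_in_O3_iff)
  then have "dd v w =
      sign_mismatches (sign_string ?P (s \<noteq> (i = 0))) (sign_string ?Q (t \<noteq> (k = 0)))"
  proof (elim disjE conjE)
    assume "i = 0" "j = 1" "k = 0" "l = 1"
    then show ?thesis
      by (simp add: v w dd_Sym sign_mismatches_sign_string)
  next
    assume "i = 0" "j = 1" "2 \<le> k" "k < l" "l \<le> 7"
    then show ?thesis
      by (simp add: v w dd_Sym sign_mismatches_sign_string)
  next
    assume "2 \<le> i" "i < j" "j \<le> 7" "k = 0" "l = 1"
    then show ?thesis
      by (simp add: v w dd_Sym sign_mismatches_sign_string)
  next
    assume ij: "2 \<le> i" "i < j" "j \<le> 7" and kl: "2 \<le> k" "k < l" "l \<le> 7"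
    then have "?P = {i, j}" "?Q = {k, l}" "{i, j} \<subseteq> {2..7}" "{k, l} \<subseteq> {2..7}"
      by auto
    with ij kl show ?thesis
      using card_sym_diff[of "{i, j}" "{k, l}"]
      by (simp add: v w dd_Sym sign_mismatches_sign_string)
  qed
  then show ?thesis
    using assms by (simp add: v w gamma1_J_coset del: gamma1.simps)
qed

lemma same_color_Sym_iff:
  "same_color (Sym s i j) (Sym t k l) \<longleftrightarrow>
     i \<le> 1 \<and> 2 \<le> j \<and> j \<le> 7 \<and> k \<le> 1 \<and> 2 \<le> l \<and> l \<le> 7 \<and> ((s = t) = (i = k))"
  by (auto simp: same_color_def Sym_in_O1_iff Sym_in_O2_iff)

lemma diff_color_Sym_iff:
  "diff_color (Sym s i j) (Sym t k l) \<longleftrightarrow>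
     i \<le> 1 \<and> 2 \<le> j \<and> j \<le> 7 \<and> k \<le> 1 \<and> 2 \<le> l \<and> l \<le> 7 \<and> ((s = t) \<noteq> (i = k))"
  by (auto simp: diff_color_def Sym_in_O1_iff Sym_in_O2_iff)

lemma dd_L_cosets:
  assumes "i \<le> 1" "2 \<le> j" "j \<le> 7" "k \<le> 1" "2 \<le> l" "l \<le> 7"
  shows "dd (Sym s i j) (Sym t k l) =
    (if s = t then 4 - 2 * (of_bool (i = k) + of_bool (j = l))
     else 2 + 2 * (of_bool (i = k) + of_bool (j = l)))"
proof -
  have "card ({i, j} \<inter> {k, l}) = of_bool (i = k) + of_bool (j = l)"
    using assms by (auto simp: card_insert_if insert_Diff_if)
  then show ?thesis
    using assms by (simp add: dd_Sym)
qed

lemma dd_diff_color_same_label: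
  assumes "diff_color v w" "gamma1 v = gamma1 w"
  shows "dd v w = 2"
proof -
  obtain s i j t k l where v: "v = Sym s i j" and w: "w = Sym t k l"
    by (metis sym.exhaust)
  show ?thesis
    using assms by (auto simp: v w diff_color_Sym_iff dd_L_cosets split: if_splits)
qed

lemma dd_same_color:
  assumes "same_color v w" "v \<noteq> w"
  shows "dd v w =
    (if \<exists>i. 1 \<le> i \<and> i \<le> 6 \<and> {gamma1 v, gamma1 w} = {Lab i, BarLab i} then 4 else 2)"
proof -
  obtain s i j t k l where v: "v = Sym s i j" and w: "w = Sym t k l"
    by (metis sym.exhaust)
  show ?thesis
    using assms
    by (auto simp: v w same_color_Sym_iff dd_L_cosets doubleton_eq_iff split: if_splits)
qed

lemma dd_diff_color_diff_label:
  assumes "diff_color v w" "gamma1 v \<noteq> gamma1 w"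
  shows "dd v w = (if v = neg w then 6 else 4)"
proof -
  obtain s i j t k l where v: "v = Sym s i j" and w: "w = Sym t k l"
    by (metis sym.exhaust)
  show ?thesis
    using assms by (auto simp: v w diff_color_Sym_iff dd_L_cosets split: if_splits)
qed

lemma dd_L_J_coset:
  assumes "i \<le> 1" "2 \<le> j" "j \<le> 7" "w \<in> O3"
  shows "\<exists>a. gamma1 w = Str a \<and> dd (Sym s i j) w = (if a ! (j - 2) = s then 2 else 4)"
proof -
  obtain t k l where w: "w = Sym t k l"
    by (metis sym.exhaust)
  have "(k = 0 \<and> l = 1) \<or> (2 \<le> k \<and> k < l \<and> l \<le> 7)"
    using assms by (simp add: w Sym_in_O3_iff)
  then have "dd (Sym s i j) w =
      (if sign_string ({k, l} - {0, 1}) (t \<noteq> (k = 0)) ! (j - 2) = s then 2 else 4)"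
  proof (elim disjE conjE)
    assume "k = 0" "l = 1"
    moreover have "{i, j} \<inter> {0, 1} = {i}"
      using assms by auto
    ultimately show ?thesis
      using assms by (simp add: w dd_Sym nth_sign_string)
  next
    assume kl: "2 \<le> k" "k < l" "l \<le> 7"
    then have "card ({i, j} \<inter> {k, l}) = of_bool (j \<in> {k, l})"
      using assms by auto
    with kl show ?thesis
      using assms by (auto simp: w dd_Sym nth_sign_string)
  qed
  then show ?thesis
    using assms by (simp add: w gamma1_J_coset del: gamma1.simps)
qed

lemma dd_plus_L_J_coset:
  assumes "i \<in> {0, 1}" "2 \<le> j" "j \<le> 7" "w \<in> O3"
  shows "dd (Sym True i j) w = (if plus_at (gamma1 w) (j - 1) then 2 else 4)"
proof -
  obtain a where "gamma1 w = Str a" "dd (Sym True i j) w = (if a ! (j - 2) then 2 else 4)"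
    using dd_L_J_coset[of i j w True] assms by auto
  then show ?thesis
    by (simp add: plus_at_def numeral_2_eq_2)
qed

lemma dd_minus_L_J_coset:
  assumes "i \<in> {0, 1}" "2 \<le> j" "j \<le> 7" "w \<in> O3"
  shows "dd (Sym False i j) w = (if minus_at (gamma1 w) (j - 1) then 2 else 4)"
proof -
  obtain a where "gamma1 w = Str a" "dd (Sym False i j) w = (if \<not> a ! (j - 2) then 2 else 4)"
    using dd_L_J_coset[of i j w False] assms by auto
  then show ?thesis
    by (simp add: minus_at_def numeral_2_eq_2)
qed

theorem proposition6p3:
  shows
  "(\<forall>v\<in>O3. \<forall>w\<in>O3. \<exists>a b. gamma1 v = Str a \<and> gamma1 w = Str b \<and>
        dd v w = real (card {p. 1 \<le> p \<and> p \<le> 6 \<and> a ! (p - 1) \<noteq> b ! (p - 1)}))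
   \<and> (\<forall>v w. diff_color v w \<and> gamma1 v = gamma1 w \<longrightarrow> dd v w = 2)
   \<and> (\<forall>v w. same_color v w \<and> v \<noteq> w \<longrightarrow>
        dd v w = (if \<exists>i. 1 \<le> i \<and> i \<le> 6 \<and> {gamma1 v, gamma1 w} = {Lab i, BarLab i}
                  then 4 else 2))
   \<and> (\<forall>v w. diff_color v w \<and> gamma1 v \<noteq> gamma1 w \<longrightarrow>
        dd v w = (if v = neg w then 6 else 4))
   \<and> (\<forall>i j w. i \<in> {0, 1} \<and> 2 \<le> j \<and> j \<le> 7 \<and> w \<in> O3 \<longrightarrow>
        dd (Sym True i j) w = (if plus_at (gamma1 w) (j - 1) then 2 else 4))
   \<and> (\<forall>i j w. i \<in> {0, 1} \<and> 2 \<le> j \<and> j \<le> 7 \<and> w \<in> O3 \<longrightarrow>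
        dd (Sym False i j) w = (if minus_at (gamma1 w) (j - 1) then 2 else 4))"
  using dd_J_cosets[unfolded sign_mismatches_def] dd_diff_color_same_label dd_same_color
    dd_diff_color_diff_label dd_plus_L_J_coset dd_minus_L_J_coset
  by blast

end
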